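(* Let $A$, $B$, $C$ be deterministic parity tree automata over the same finite alphabet with pairwise disjoint state sets, and let $p$ be a state of $C$. If $L(A)\le_W L(B)$, then $L(C_{p:=A})\le_W L(C_{p:=B})$.
   Context: Deterministic parity tree automata have a total transition function $\delta:Q\times\Sigma\to Q\times Q$; a transition $q\xrightarrow{\sigma}q_1,q_2$ has left target $q_1$ (direction 0) and right target $q_2$ (direction 1), written $q\xrightarrow{\sigma,0}q_1$, $q\xrightarrow{\sigma,1}q_2$. For a state $p$ of $C$, $C_{p:=A}$ is the automaton obtained from the disjoint union of $C$ and $A$ by redirecting every transition edge $r\xrightarrow{\sigma,d}p$ of $C$ to $r\xrightarrow{\sigma,d}q_0^A$ (where $q_0^A$ is the initial state of $A$); the initial state is that of $C$ (or $q_0^A$ if $p$ is the initial state of $C$). Acceptance: the highest rank occurring infinitely often on each path of the run is even. $\le_W$ is continuous (Wadge) reducibility. *)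

theory Defs
  imports Main
begin

text \<open>Infinite binary trees: nodes are bool lists (False = direction 0 = left,
  True = direction 1 = right), read from the root.\<close>
type_synonym 'a tree = "bool list \<Rightarrow> 'a"

definition trees :: "'a set \<Rightarrow> 'a tree set" where
  "trees \<Sigma> = {t. \<forall>v. t v \<in> \<Sigma>}"

record ('q, 'a) dpta =
  states :: "'q set"
  init :: 'q
  trans :: "'q \<Rightarrow> 'a \<Rightarrow> 'q \<times> 'q"
  rank :: "'q \<Rightarrow> nat"

definition wf_dpta :: "'a set \<Rightarrow> ('q, 'a) dpta \<Rightarrow> bool" where
  "wf_dpta \<Sigma> A \<longleftrightarrow> finite (states A) \<and> init A \<in> states A \<and>
     (\<forall>q\<in>states A. \<forall>a\<in>\<Sigma>. fst (trans A q a) \<in> states A \<and> snd (trans A q a) \<in> states A)"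

definition dir :: "'q \<times> 'q \<Rightarrow> bool \<Rightarrow> 'q" where
  "dir qq d = (if d then snd qq else fst qq)"

fun run_from :: "('q \<Rightarrow> 'a \<Rightarrow> 'q \<times> 'q) \<Rightarrow> 'q \<Rightarrow> 'a tree \<Rightarrow> bool list \<Rightarrow> 'q" where
  "run_from \<delta> q t [] = q"
| "run_from \<delta> q t (d # v) = run_from \<delta> (dir (\<delta> q (t [])) d) (\<lambda>w. t (d # w)) v"

definition run :: "('q, 'a) dpta \<Rightarrow> 'a tree \<Rightarrow> bool list \<Rightarrow> 'q" where
  "run A t = run_from (trans A) (init A) t"

definition parity_ok :: "(nat \<Rightarrow> nat) \<Rightarrow> bool" where
  "parity_ok s \<longleftrightarrow> (\<exists>m. even m \<and> (\<exists>\<^sub>\<infinity>n. s n = m) \<and> (\<forall>\<^sub>\<infinity>n. s n \<le> m))"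

definition accepts :: "('q, 'a) dpta \<Rightarrow> 'a tree \<Rightarrow> bool" where
  "accepts A t \<longleftrightarrow> (\<forall>\<pi> :: nat \<Rightarrow> bool. parity_ok (\<lambda>n. rank A (run A t (map \<pi> [0..<n]))))"

definition lang :: "'a set \<Rightarrow> ('q, 'a) dpta \<Rightarrow> 'a tree set" where
  "lang \<Sigma> A = {t \<in> trees \<Sigma>. accepts A t}"

definition agree_upto :: "nat \<Rightarrow> 'a tree \<Rightarrow> 'a tree \<Rightarrow> bool" where
  "agree_upto n t t' \<longleftrightarrow> (\<forall>v. length v < n \<longrightarrow> t v = t' v)"

text \<open>Continuity w.r.t. the usual (Cantor-like) topology on trees.\<close>
definition tree_continuous :: "'a set \<Rightarrow> ('a tree \<Rightarrow> 'a tree) \<Rightarrow> bool" where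
  "tree_continuous \<Sigma> f \<longleftrightarrow> (\<forall>t\<in>trees \<Sigma>. \<forall>n. \<exists>m. \<forall>t'\<in>trees \<Sigma>.
      agree_upto m t t' \<longrightarrow> agree_upto n (f t) (f t'))"

definition wadge_le :: "'a set \<Rightarrow> 'a tree set \<Rightarrow> 'a tree set \<Rightarrow> bool" where
  "wadge_le \<Sigma> L M \<longleftrightarrow> (\<exists>f. f ` trees \<Sigma> \<subseteq> trees \<Sigma> \<and> tree_continuous \<Sigma> f \<and>
      (\<forall>t\<in>trees \<Sigma>. t \<in> L \<longleftrightarrow> f t \<in> M))"

text \<open>Substitution C_{p:=A}: disjoint union (state sets assumed disjoint, in a common
  state type), edges of C into p redirected to the initial state of A.\<close>
definition subst :: "('q, 'a) dpta \<Rightarrow> 'q \<Rightarrow> ('q, 'a) dpta \<Rightarrow> ('q, 'a) dpta" where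
  "subst C p A = (let redir = (\<lambda>q. if q = p then init A else q) in
     \<lparr> states = states C \<union> states A,
       init = redir (init C),
       trans = (\<lambda>q a. if q \<in> states A then trans A q a
                      else (redir (fst (trans C q a)), redir (snd (trans C q a)))),
       rank = (\<lambda>q. if q \<in> states A then rank A q else rank C q) \<rparr>)"

end

theory Submission
  imports Defs
begin

(* Let g witness L(A) \<le>_W L(B).  The reduction from L(C_{p:=A}) to
   L(C_{p:=B}) is the "grafting" map graft C p g: it leaves a tree t unchanged outside the
   nodes below a first visit of C's run to p, and replaces the subtree of t at every such
   first visit u by g applied to it. *)

section \<open>Subtrees, branches and runs\<close>

definition sub :: "'a tree \<Rightarrow> bool list \<Rightarrow> 'a tree" where
  "sub t u = (\<lambda>w. t (u @ w))"

definition path :: "(nat \<Rightarrow> bool) \<Rightarrow> nat \<Rightarrow> bool list" where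
  "path \<pi> n = map \<pi> [0..<n]"

lemma sub_trees: "t \<in> trees \<Sigma> \<Longrightarrow> sub t u \<in> trees \<Sigma>"
  by (simp add: trees_def sub_def)

lemma length_path [simp]: "length (path \<pi> n) = n"
  by (simp add: path_def)

lemma take_path [simp]: "take k (path \<pi> n) = path \<pi> (min k n)"
  by (simp add: path_def take_map min_def)

lemma path_add: "path \<pi> (k + n) = path \<pi> k @ path (\<lambda>i. \<pi> (i + k)) n"
  by (induction n) (simp_all add: path_def add.commute)

lemma accepts_path: "accepts M t \<longleftrightarrow> (\<forall>\<pi>. parity_ok (\<lambda>n. rank M (run M t (path \<pi> n))))"
  by (simp add: accepts_def path_def)

lemma run_from_append:
  "run_from \<delta> q t (u @ x) = run_from \<delta> (run_from \<delta> q t u) (sub t u) x"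
  by (induction u arbitrary: q t) (simp_all add: sub_def)

lemma run_from_snoc:
  "run_from \<delta> q t (v @ [d]) = dir (\<delta> (run_from \<delta> q t v) (t v)) d"
  by (simp add: run_from_append sub_def)

lemma run_from_local:
  "(\<forall>k<length u. t (take k u) = t' (take k u)) \<Longrightarrow> run_from \<delta> q t u = run_from \<delta> q t' u"
proof (induction u arbitrary: q t t')
  case Nil
  then show ?case by simp
next
  case (Cons d v)
  have root: "t [] = t' []"
    using Cons.prems by (metis length_Cons take_0 zero_less_Suc)
  have "\<forall>k<length v. t (d # take k v) = t' (d # take k v)"
    using Cons.prems by (metis Suc_less_eq length_Cons take_Suc_Cons)
  with Cons.IH root show ?case by simp
qed

lemma run_agree:
  assumes "agree_upto m t t'" and "length u \<le> m"
  shows "run C t u = run C t' u"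
  unfolding run_def by (rule run_from_local) (use assms in \<open>auto simp: agree_upto_def\<close>)

lemma run_from_states:
  assumes "wf_dpta \<Sigma> M"
  shows "q \<in> states M \<Longrightarrow> t \<in> trees \<Sigma> \<Longrightarrow> run_from (trans M) q t u \<in> states M"
proof (induction u arbitrary: q t)
  case Nil
  then show ?case by simp
next
  case (Cons d v)
  have "t [] \<in> \<Sigma>" and "(\<lambda>w. t (d # w)) \<in> trees \<Sigma>"
    using Cons.prems(2) by (simp_all add: trees_def)
  moreover from this(1) have "dir (trans M q (t [])) d \<in> states M"
    using assms Cons.prems(1) by (simp add: wf_dpta_def dir_def)
  ultimately show ?case using Cons.IH by simp
qed

lemma run_states: "wf_dpta \<Sigma> M \<Longrightarrow> t \<in> trees \<Sigma> \<Longrightarrow> run M t u \<in> states M"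
  unfolding run_def by (rule run_from_states) (auto simp: wf_dpta_def)

lemma run_from_cong:
  assumes agree: "\<forall>q\<in>S. \<forall>a\<in>\<Sigma>. \<delta> q a = \<delta>' q a"
    and closed: "\<forall>q\<in>S. \<forall>a\<in>\<Sigma>. fst (\<delta> q a) \<in> S \<and> snd (\<delta> q a) \<in> S"
  shows "q \<in> S \<Longrightarrow> t \<in> trees \<Sigma> \<Longrightarrow> run_from \<delta>' q t u = run_from \<delta> q t u"
proof (induction u arbitrary: q t)
  case Nil
  then show ?case by simp
next
  case (Cons d v)
  have root: "t [] \<in> \<Sigma>" and "(\<lambda>w. t (d # w)) \<in> trees \<Sigma>"
    using Cons.prems(2) by (simp_all add: trees_def)
  moreover have "dir (\<delta> q (t [])) d \<in> S"
    using closed Cons.prems(1) root by (simp add: dir_def)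
  moreover have "\<delta>' q (t []) = \<delta> q (t [])"
    using agree Cons.prems(1) root by auto
  ultimately show ?case using Cons.IH by simp
qed

lemma parity_shift: "parity_ok (\<lambda>n. s (k + n)) \<longleftrightarrow> parity_ok s"
proof -
  have often: "(\<exists>\<^sub>\<infinity>n. P (k + n)) \<longleftrightarrow> (\<exists>\<^sub>\<infinity>n. P n)" for P :: "nat \<Rightarrow> bool"
    using eventually_sequentially_seg[of "\<lambda>n. \<not> P n" k]
    by (simp add: frequently_def cofinite_eq_sequentially add.commute)
  have almost_all: "(\<forall>\<^sub>\<infinity>n. P (k + n)) \<longleftrightarrow> (\<forall>\<^sub>\<infinity>n. P n)" for P :: "nat \<Rightarrow> bool"
    using eventually_sequentially_seg[of P k]
    by (simp add: cofinite_eq_sequentially add.commute)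
  show ?thesis
    unfolding parity_ok_def using often[of "\<lambda>n. s n = _"] almost_all[of "\<lambda>n. s n \<le> _"]
    by simp
qed

section \<open>First visits to a state\<close>

definition first_visit :: "('q, 'a) dpta \<Rightarrow> 'q \<Rightarrow> 'a tree \<Rightarrow> bool list \<Rightarrow> bool" where
  "first_visit C p t u \<longleftrightarrow> run C t u = p \<and> (\<forall>k<length u. run C t (take k u) \<noteq> p)"

lemma exists_first_visit:
  assumes "run C t (take k w) = p"
  shows "\<exists>j\<le>k. first_visit C p t (take j w)"
proof -
  define j where "j = (LEAST j. run C t (take j w) = p)"
  have "run C t (take j w) = p" and "j \<le> k"
    unfolding j_def using assms by (rule LeastI, rule Least_le)
  moreover have "\<forall>i<length (take j w). run C t (take i (take j w)) \<noteq> p"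
    using not_less_Least[of _ "\<lambda>j. run C t (take j w) = p"] by (auto simp: j_def min_def)
  ultimately show ?thesis by (auto simp: first_visit_def)
qed

lemma take_length_take: "take (length (take k w)) w = take k w"
  by (simp add: min_def)

lemma first_visit_unique:
  assumes "first_visit C p t (take k w)" and "first_visit C p t (take j w)"
  shows "take k w = take j w"
proof -
  have no_shorter: False
    if "first_visit C p t (take k w)" "first_visit C p t (take j w)"
      "length (take k w) < length (take j w)" for k j
  proof -
    let ?l = "length (take k w)"
    have "run C t (take ?l (take j w)) \<noteq> p"
      using that(2,3) by (simp add: first_visit_def)
    moreover have "take ?l (take j w) = take ?l w"
      using that(3) by simp
    ultimately show False
      using that(1) take_length_take by (metis first_visit_def)
  qed
  have "length (take k w) = length (take j w)"
    using no_shorter[OF assms] no_shorter[OF assms(2,1)] by (meson linorder_neqE_nat)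
  then show ?thesis by (metis take_length_take)
qed

lemma avoids_iff_no_first_visit:
  "(\<forall>n. run C t (path \<pi> n) \<noteq> p) \<longleftrightarrow> (\<forall>n. \<not> first_visit C p t (path \<pi> n))"
proof
  assume "\<forall>n. \<not> first_visit C p t (path \<pi> n)"
  then show "\<forall>n. run C t (path \<pi> n) \<noteq> p"
    using exists_first_visit[of C t _ "path \<pi> _" p] by (metis take_path min.idem)
qed (simp add: first_visit_def)

lemma first_visit_agree:
  assumes "agree_upto m t t'" and "length u \<le> m"
  shows "first_visit C p t u \<longleftrightarrow> first_visit C p t' u"
proof -
  have "run C t (take k u) = run C t' (take k u)" for k
    using assms by (intro run_agree) auto
  moreover have "run C t u = run C t' u"
    using assms by (rule run_agree)
  ultimately show ?thesis by (simp add: first_visit_def)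
qed

section \<open>Acceptance by the substituted automaton\<close>

lemma subst_init: "init (subst C p D) = (if init C = p then init D else init C)"
  by (simp add: subst_def Let_def)

lemma subst_trans: "trans (subst C p D) q a = (if q \<in> states D then trans D q a else
   ((if fst (trans C q a) = p then init D else fst (trans C q a)),
    (if snd (trans C q a) = p then init D else snd (trans C q a))))"
  by (simp add: subst_def Let_def)

lemma subst_rank: "rank (subst C p D) q = (if q \<in> states D then rank D q else rank C q)"
  by (simp add: subst_def Let_def)

lemma run_subst_before_visit:
  assumes "wf_dpta \<Sigma> C" "states D \<inter> states C = {}" "t \<in> trees \<Sigma>"
  shows "(\<forall>k<length w. run C t (take k w) \<noteq> p) \<Longrightarrow>
     run (subst C p D) t w = (if run C t w = p then init D else run C t w)"
proof (induction w rule: rev_induct)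
  case Nil
  then show ?case by (simp add: run_def subst_init)
next
  case (snoc d v)
  then have ih: "run (subst C p D) t v = run C t v"
    using snoc.prems[rule_format, of "length v"] by auto
  have "run C t v \<notin> states D"
    using run_states[OF assms(1,3)] assms(2) by blast
  with ih show ?case by (simp add: run_def run_from_snoc subst_trans dir_def)
qed

lemma rank_subst_avoiding:
  assumes "wf_dpta \<Sigma> C" "states D \<inter> states C = {}" "t \<in> trees \<Sigma>"
    and avoid: "\<forall>n. run C t (path \<pi> n) \<noteq> p"
  shows "rank (subst C p D) (run (subst C p D) t (path \<pi> n)) = rank C (run C t (path \<pi> n))"
proof -
  have "run (subst C p D) t (path \<pi> n) = run C t (path \<pi> n)"
    using run_subst_before_visit[OF assms(1-3), of "path \<pi> n" p] avoid by simp
  moreover have "run C t (path \<pi> n) \<notin> states D"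
    using run_states[OF assms(1,3)] assms(2) by blast
  ultimately show ?thesis by (simp add: subst_rank)
qed

lemma rank_subst_after_visit:
  assumes "wf_dpta \<Sigma> C" "wf_dpta \<Sigma> D" "states D \<inter> states C = {}" "t \<in> trees \<Sigma>"
    and visit: "first_visit C p t (path \<pi> k)"
  shows "rank (subst C p D) (run (subst C p D) t (path \<pi> (k + n)))
       = rank D (run D (sub t (path \<pi> k)) (path (\<lambda>i. \<pi> (i + k)) n))"
proof -
  have at_visit: "run (subst C p D) t (path \<pi> k) = init D"
    using run_subst_before_visit[OF assms(1,3,4), of "path \<pi> k" p] visit
    by (simp add: first_visit_def)
  have same_run: "run_from (trans (subst C p D)) (init D) s x = run_from (trans D) (init D) s x"
    if "s \<in> trees \<Sigma>" for s x
    by (rule run_from_cong[where S="states D" and \<Sigma>=\<Sigma>])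
      (use assms(2) that in \<open>auto simp: subst_trans wf_dpta_def\<close>)
  have "run (subst C p D) t (path \<pi> (k + n)) = run D (sub t (path \<pi> k)) (path (\<lambda>i. \<pi> (i + k)) n)"
    using at_visit same_run[OF sub_trees[OF assms(4)]]
    by (simp add: run_def path_add run_from_append)
  with run_states[OF assms(2) sub_trees[OF assms(4)]] show ?thesis
    by (simp add: subst_rank)
qed

definition outside_ok :: "('q, 'a) dpta \<Rightarrow> 'q \<Rightarrow> 'a tree \<Rightarrow> bool" where
  "outside_ok C p t \<longleftrightarrow>
     (\<forall>\<pi>. (\<forall>n. run C t (path \<pi> n) \<noteq> p) \<longrightarrow> parity_ok (\<lambda>n. rank C (run C t (path \<pi> n))))"

lemma path_through:
  obtains \<pi> where "path \<pi> (length u) = u" and "(\<lambda>i. \<pi> (i + length u)) = \<pi>'"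
proof
  define \<pi> where "\<pi> = (\<lambda>i. if i < length u then u ! i else \<pi>' (i - length u))"
  show "path \<pi> (length u) = u"
    by (rule nth_equalityI) (simp_all add: path_def \<pi>_def)
  show "(\<lambda>i. \<pi> (i + length u)) = \<pi>'"
    by (simp add: \<pi>_def)
qed

lemma accepts_subst_iff:
  assumes "wf_dpta \<Sigma> C" "wf_dpta \<Sigma> D" "states D \<inter> states C = {}" "t \<in> trees \<Sigma>"
  shows "accepts (subst C p D) t \<longleftrightarrow>
    outside_ok C p t \<and> (\<forall>u. first_visit C p t u \<longrightarrow> accepts D (sub t u))"
proof -
  let ?r = "\<lambda>\<pi> n. rank (subst C p D) (run (subst C p D) t (path \<pi> n))"
  have visit_branch: "parity_ok (?r \<pi>) \<longleftrightarrow>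
      parity_ok (\<lambda>n. rank D (run D (sub t (path \<pi> k)) (path (\<lambda>i. \<pi> (i + k)) n)))"
    if "first_visit C p t (path \<pi> k)" for \<pi> k
    using parity_shift[of "?r \<pi>" k] rank_subst_after_visit[OF assms that] by simp
  have "outside_ok C p t" if "\<forall>\<pi>. parity_ok (?r \<pi>)"
    unfolding outside_ok_def
  proof (intro allI impI)
    fix \<pi> assume avoid: "\<forall>n. run C t (path \<pi> n) \<noteq> p"
    from that have "parity_ok (?r \<pi>)" ..
    then show "parity_ok (\<lambda>n. rank C (run C t (path \<pi> n)))"
      using rank_subst_avoiding[OF assms(1,3,4) avoid] by simp
  qed
  moreover have "accepts D (sub t u)" if "\<forall>\<pi>. parity_ok (?r \<pi>)" "first_visit C p t u" for u
    unfolding accepts_path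
  proof
    fix \<pi>'
    obtain \<pi> where u: "path \<pi> (length u) = u" and \<pi>': "(\<lambda>i. \<pi> (i + length u)) = \<pi>'"
      by (rule path_through)
    have "parity_ok (?r \<pi>)" using that(1) ..
    with visit_branch[of \<pi> "length u"] that(2) show "parity_ok (\<lambda>n. rank D (run D (sub t u) (path \<pi>' n)))"
      unfolding u \<pi>' by blast
  qed
  moreover have "parity_ok (?r \<pi>)"
    if "outside_ok C p t" "\<forall>u. first_visit C p t u \<longrightarrow> accepts D (sub t u)" for \<pi>
  proof (cases "\<forall>n. run C t (path \<pi> n) \<noteq> p")
    case True
    with that(1) have "parity_ok (\<lambda>n. rank C (run C t (path \<pi> n)))"
      unfolding outside_ok_def by blast
    then show ?thesis
      using rank_subst_avoiding[OF assms(1,3,4) True] by simp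
  next
    case False
    then obtain j where visit: "first_visit C p t (path \<pi> j)"
      unfolding avoids_iff_no_first_visit by blast
    with that(2) have "accepts D (sub t (path \<pi> j))" by blast
    then show ?thesis
      using visit_branch[OF visit] by (simp add: accepts_path)
  qed
  ultimately show ?thesis unfolding accepts_path by blast
qed

section \<open>Grafting\<close>

definition graft :: "('q, 'a) dpta \<Rightarrow> 'q \<Rightarrow> ('a tree \<Rightarrow> 'a tree) \<Rightarrow> 'a tree \<Rightarrow> 'a tree" where
  "graft C p g t w = (if \<exists>k. first_visit C p t (take k w)
     then g (sub t (take (LEAST k. first_visit C p t (take k w)) w))
            (drop (LEAST k. first_visit C p t (take k w)) w)
     else t w)"

lemma graft_below_visit:
  assumes "first_visit C p t (take k w)"
  shows "graft C p g t w = g (sub t (take k w)) (drop k w)"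
proof -
  let ?k = "LEAST k. first_visit C p t (take k w)"
  have "first_visit C p t (take ?k w)" using assms by (rule LeastI)
  then have "take ?k w = take k w" using first_visit_unique[OF _ assms] by blast
  moreover from this have "drop ?k w = drop k w"
    by (metis append_take_drop_id same_append_eq)
  ultimately show ?thesis using assms unfolding graft_def by auto
qed

lemma graft_outside:
  "\<not> (\<exists>k. first_visit C p t (take k w)) \<Longrightarrow> graft C p g t w = t w"
  unfolding graft_def by simp

lemma run_graft:
  assumes "\<forall>k<length u. run C t (take k u) \<noteq> p"
  shows "run C (graft C p g t) u = run C t u"
  unfolding run_def
proof (rule run_from_local, intro allI impI)
  fix k assume k: "k < length u"
  have "\<not> first_visit C p t (take j (take k u))" for j
    using assms k by (auto simp: first_visit_def)
  then show "graft C p g t (take k u) = t (take k u)"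
    by (intro graft_outside) blast
qed

lemma first_visit_graft_iff:
  "first_visit C p (graft C p g t) u \<longleftrightarrow> first_visit C p t u"
proof
  show first_visit_graft: "first_visit C p (graft C p g t) v" if "first_visit C p t v" for v
    using that run_graft[of v C t p g]
      run_graft[of "take _ v" C t p g] by (auto simp: first_visit_def)
  assume visit': "first_visit C p (graft C p g t) u"
  have before: "\<forall>k<length u. run C t (take k u) \<noteq> p"
  proof (intro allI impI notI)
    fix k assume "k < length u" "run C t (take k u) = p"
    then obtain j where "j < length u" "first_visit C p t (take j u)"
      using exists_first_visit[of C t k u p] by (meson order.strict_trans1)
    then show False using visit' first_visit_graft by (auto simp: first_visit_def)
  qed
  then show "first_visit C p t u"
    using visit' run_graft[OF before] by (simp add: first_visit_def)
qed

lemma sub_graft: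
  assumes "first_visit C p t u"
  shows "sub (graft C p g t) u = g (sub t u)"
proof
  fix x
  have "first_visit C p t (take (length u) (u @ x))" using assms by simp
  from graft_below_visit[OF this] show "sub (graft C p g t) u x = g (sub t u) x"
    by (simp add: sub_def)
qed

text \<open>Branches avoiding p are untouched, so the outside part of acceptance is preserved.\<close>
lemma outside_ok_graft: "outside_ok C p (graft C p g t) \<longleftrightarrow> outside_ok C p t"
proof -
  have avoid: "(\<forall>n. run C (graft C p g t) (path \<pi> n) \<noteq> p) \<longleftrightarrow> (\<forall>n. run C t (path \<pi> n) \<noteq> p)"
    for \<pi>
    by (simp add: avoids_iff_no_first_visit first_visit_graft_iff)
  have "run C (graft C p g t) (path \<pi> n) = run C t (path \<pi> n)"
    if "\<forall>n. run C t (path \<pi> n) \<noteq> p" for \<pi> n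
    by (rule run_graft) (use that in auto)
  with avoid show ?thesis by (simp add: outside_ok_def)
qed

section \<open>Grafting is a continuous map on trees\<close>

lemma graft_trees:
  assumes "g ` trees \<Sigma> \<subseteq> trees \<Sigma>" and "t \<in> trees \<Sigma>"
  shows "graft C p g t \<in> trees \<Sigma>"
  unfolding trees_def mem_Collect_eq
proof
  fix w
  show "graft C p g t w \<in> \<Sigma>"
  proof (cases "\<exists>k. first_visit C p t (take k w)")
    case True
    then obtain k where "first_visit C p t (take k w)" by blast
    moreover have "g (sub t (take k w)) \<in> trees \<Sigma>"
      using assms sub_trees by blast
    ultimately show ?thesis by (simp add: graft_below_visit trees_def)
  next
    case False
    then show ?thesis using assms(2) by (simp add: graft_outside trees_def)
  qed
qed

lemma agree_upto_sub:
  assumes "agree_upto (length u + m) t t'"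
  shows "agree_upto m (sub t u) (sub t' u)"
  using assms by (simp add: agree_upto_def sub_def)

lemma agree_upto_mono: "agree_upto m t t' \<Longrightarrow> k \<le> m \<Longrightarrow> agree_upto k t t'"
  by (simp add: agree_upto_def)

lemma tree_continuousD:
  "tree_continuous \<Sigma> f \<Longrightarrow> t \<in> trees \<Sigma> \<Longrightarrow>
     \<exists>m. \<forall>t'\<in>trees \<Sigma>. agree_upto m t t' \<longrightarrow> agree_upto n (f t) (f t')"
  unfolding tree_continuous_def by blast

lemma continuous_on_subtrees:
  assumes cont: "tree_continuous \<Sigma> g" and t: "t \<in> trees \<Sigma>" and "finite U"
  shows "\<exists>m. \<forall>t'\<in>trees \<Sigma>. agree_upto m t t' \<longrightarrow>
           (\<forall>u\<in>U. agree_upto n (g (sub t u)) (g (sub t' u)))"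
  using \<open>finite U\<close>
proof (induction U rule: finite_induct)
  case empty
  then show ?case by blast
next
  case (insert u U)
  obtain m where m: "\<forall>t'\<in>trees \<Sigma>. agree_upto m t t' \<longrightarrow>
      (\<forall>u\<in>U. agree_upto n (g (sub t u)) (g (sub t' u)))"
    using insert.IH by (rule exE)
  obtain k where k: "\<forall>s\<in>trees \<Sigma>. agree_upto k (sub t u) s \<longrightarrow> agree_upto n (g (sub t u)) (g s)"
    using tree_continuousD[OF cont sub_trees[OF t]] by (rule exE)
  show ?case
  proof (intro exI ballI impI)
    fix t' v assume t': "t' \<in> trees \<Sigma>" and agree: "agree_upto (max m (length u + k)) t t'"
      and v: "v \<in> insert u U"
    show "agree_upto n (g (sub t v)) (g (sub t' v))"
    proof (cases "v = u")
      case True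
      have "agree_upto k (sub t u) (sub t' u)"
        using agree by (intro agree_upto_sub, rule agree_upto_mono) auto
      with True k sub_trees[OF t'] show ?thesis by blast
    next
      case False
      have "agree_upto m t t'"
        using agree by (rule agree_upto_mono) simp
      with False v m t' show ?thesis by blast
    qed
  qed
qed

text \<open>The labels of graft C p g t above depth n depend only on the labels of t above depth n
  and on the g-images of the subtrees at the (finitely many) nodes above depth n.\<close>
lemma graft_continuous:
  assumes cont: "tree_continuous \<Sigma> g"
  shows "tree_continuous \<Sigma> (graft C p g)"
  unfolding tree_continuous_def
proof (intro ballI allI)
  fix t n assume t: "t \<in> trees \<Sigma>"
  define U where "U = {u :: bool list. set u \<subseteq> UNIV \<and> length u \<le> n}"
  have "finite U" unfolding U_def by (rule finite_lists_length_le) simp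
  from continuous_on_subtrees[OF cont t this] obtain m where m: "\<forall>t'\<in>trees \<Sigma>. agree_upto m t t' \<longrightarrow>
      (\<forall>u\<in>U. agree_upto n (g (sub t u)) (g (sub t' u)))" by (rule exE)
  show "\<exists>m. \<forall>t'\<in>trees \<Sigma>. agree_upto m t t' \<longrightarrow> agree_upto n (graft C p g t) (graft C p g t')"
  proof (intro exI ballI impI)
    fix t' assume t': "t' \<in> trees \<Sigma>" and agree: "agree_upto (max m n) t t'"
    show "agree_upto n (graft C p g t) (graft C p g t')"
      unfolding agree_upto_def
    proof (intro allI impI)
      fix w :: "bool list" assume w: "length w < n"
      have same_visits: "first_visit C p t (take k w) \<longleftrightarrow> first_visit C p t' (take k w)" for k
        by (rule first_visit_agree[OF agree]) (use w in simp)
      show "graft C p g t w = graft C p g t' w"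
      proof (cases "\<exists>k. first_visit C p t (take k w)")
        case True
        then obtain k where k: "first_visit C p t (take k w)" by blast
        have "take k w \<in> U" using w by (simp add: U_def)
        moreover have "agree_upto m t t'" using agree by (rule agree_upto_mono) simp
        ultimately have "agree_upto n (g (sub t (take k w))) (g (sub t' (take k w)))"
          using m t' by blast
        then have "g (sub t (take k w)) (drop k w) = g (sub t' (take k w)) (drop k w)"
          using w by (simp add: agree_upto_def)
        moreover have "first_visit C p t' (take k w)" using k same_visits by blast
        ultimately show ?thesis
          using k by (simp add: graft_below_visit)
      next
        case False
        then have "\<not> (\<exists>k. first_visit C p t' (take k w))" using same_visits by blast
        moreover have "t w = t' w" using agree w by (simp add: agree_upto_def)
        ultimately show ?thesis
          using False by (simp add: graft_outside)
      qed
    qed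
  qed
qed

lemma graft_reduces:
  assumes "wf_dpta \<Sigma> A" "wf_dpta \<Sigma> B" "wf_dpta \<Sigma> C"
    and "states A \<inter> states C = {}" "states B \<inter> states C = {}"
    and g_trees: "g ` trees \<Sigma> \<subseteq> trees \<Sigma>"
    and g_red: "\<forall>s\<in>trees \<Sigma>. s \<in> lang \<Sigma> A \<longleftrightarrow> g s \<in> lang \<Sigma> B"
    and t: "t \<in> trees \<Sigma>"
  shows "t \<in> lang \<Sigma> (subst C p A) \<longleftrightarrow> graft C p g t \<in> lang \<Sigma> (subst C p B)"
proof -
  let ?t' = "graft C p g t"
  have t': "?t' \<in> trees \<Sigma>" using graft_trees[OF g_trees t] .
  have g_acc: "accepts B (g s) \<longleftrightarrow> accepts A s" if "s \<in> trees \<Sigma>" for s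
    using g_trees g_red that by (auto simp: lang_def)
  have visit: "accepts B (sub ?t' u) \<longleftrightarrow> accepts A (sub t u)" if "first_visit C p t u" for u
    using sub_graft[OF that] g_acc[OF sub_trees[OF t]] by simp
  have visits: "(first_visit C p ?t' u \<longrightarrow> accepts B (sub ?t' u))
      \<longleftrightarrow> (first_visit C p t u \<longrightarrow> accepts A (sub t u))" for u
    by (simp add: first_visit_graft_iff visit)
  have "t \<in> lang \<Sigma> (subst C p A) \<longleftrightarrow> accepts (subst C p A) t"
    using t by (simp add: lang_def)
  also have "\<dots> \<longleftrightarrow> outside_ok C p t \<and> (\<forall>u. first_visit C p t u \<longrightarrow> accepts A (sub t u))"
    by (rule accepts_subst_iff[OF assms(3,1,4) t])
  also have "\<dots> \<longleftrightarrow> outside_ok C p ?t' \<and> (\<forall>u. first_visit C p ?t' u \<longrightarrow> accepts B (sub ?t' u))"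
    by (simp only: visits outside_ok_graft)
  also have "\<dots> \<longleftrightarrow> accepts (subst C p B) ?t'"
    by (rule accepts_subst_iff[OF assms(3,2,5) t', symmetric])
  also have "\<dots> \<longleftrightarrow> ?t' \<in> lang \<Sigma> (subst C p B)"
    using t' by (simp add: lang_def)
  finally show ?thesis .
qed

theorem lemma5p5:
  fixes \<Sigma> :: "'a set" and A B C :: "('q, 'a) dpta" and p :: 'q
  assumes "finite \<Sigma>"
    and "wf_dpta \<Sigma> A" and "wf_dpta \<Sigma> B" and "wf_dpta \<Sigma> C"
    and "states A \<inter> states B = {}" and "states A \<inter> states C = {}"
    and "states B \<inter> states C = {}"
    and "p \<in> states C"
    and "wadge_le \<Sigma> (lang \<Sigma> A) (lang \<Sigma> B)"
  shows "wadge_le \<Sigma> (lang \<Sigma> (subst C p A)) (lang \<Sigma> (subst C p B))"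
proof -
  from assms(9) obtain g where g_trees: "g ` trees \<Sigma> \<subseteq> trees \<Sigma>"
    and g_cont: "tree_continuous \<Sigma> g"
    and g_red: "\<forall>s\<in>trees \<Sigma>. s \<in> lang \<Sigma> A \<longleftrightarrow> g s \<in> lang \<Sigma> B"
    unfolding wadge_le_def by (elim exE conjE)
  have "graft C p g ` trees \<Sigma> \<subseteq> trees \<Sigma>"
    using graft_trees[OF g_trees] by (intro image_subsetI)
  moreover have "tree_continuous \<Sigma> (graft C p g)"
    using g_cont by (rule graft_continuous)
  moreover have "\<forall>t\<in>trees \<Sigma>. t \<in> lang \<Sigma> (subst C p A) \<longleftrightarrow> graft C p g t \<in> lang \<Sigma> (subst C p B)"
    using graft_reduces[OF assms(2-4,6,7) g_trees g_red] by (intro ballI)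
  ultimately show ?thesis
    unfolding wadge_le_def by (intro exI[of _ "graft C p g"] conjI)
qed

end
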